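(* Let $n\geq 1$. The map $\Gamma$, sending a cell $\langle c^m,c^M\rangle$ of size $n$ to the $(n-1)$-tuple $(\gamma(c^m_1,c^M_1),\dots,\gamma(c^m_{n-1},c^M_{n-1}))$, where $\gamma(a,b)=a$ if $a<0$ and $\gamma(a,b)=b$ if $a\geq 0$, is a bijection from the set of cells of size $n$ to the set $\mathcal{CC}^{sync}_n$ of synchronized cubic coordinates of size $n$.
   Context: A Tamari diagram of size $n$ is a word $u=u_1\cdots u_n$ of integers with $0\leq u_i\leq n-i$ and $u_{i+j}\leq u_i-j$ for all $i\in[n]$, $0\leq j\leq u_i$. A dual Tamari diagram of size $n$ is a word $v$ of integers with $0\leq v_i\leq i-1$ and $v_{i-j}\leq v_i-j$ for all $i\in[n]$, $0\leq j\leq v_i$. $(u,v)$ is a Tamari interval diagram if moreover for all $1\leq i<j\leq n$ with $j-i\leq u_i$ one has $v_j<j-i$. A cubic coordinate of size $n$ is $c\in\mathbb{Z}^{n-1}$ such that $(u,v)$ with $u_i=\max(c_i,0)$ ($i\in[n-1]$), $u_n=0$, $v_1=0$, $v_i=|\min(c_{i-1},0)|$ ($2\leq i\leq n$) is a Tamari interval diagram; $\mathcal{CC}_n$ denotes their set. A cubic coordinate is synchronized if all its entries are nonzero. For $c\in\mathcal{CC}_n$ and $i\in[n-1]$, the minimal increase $\uparrow_i(c)$ is defined when there exists a cubic coordinate agreeing with $c$ outside position $i$ and with $i$-th entry $>c_i$; then $\uparrow_i(c)$ is the tuple obtained from $c$ by replacing $c_i$ by the smallest integer $t>c_i$ such that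 the result is a cubic coordinate (equivalently, $\uparrow_i(c)$ covers $c$ in the componentwise order on $\mathcal{CC}_n$ and differs from $c$ only at position $i$). $c$ is minimal-cellular if $\uparrow_i(c)$ is defined for every $i\in[n-1]$. For minimal-cellular $c^m$, its maximal-cellular correspondent is $c^M=\uparrow_1(\uparrow_2(\cdots(\uparrow_{n-1}(c^m))\cdots))$ (every step of this composition is defined), and the pair $\langle c^m,c^M\rangle$ is a cell of size $n$. *)

theory Defs
  imports Main
begin

text \<open>Words are int lists; the paper's 1-based entry w_i is w ! (i - 1).\<close>

definition tamari_diagram :: "nat \<Rightarrow> int list \<Rightarrow> bool" where
  "tamari_diagram n u \<longleftrightarrow> length u = n \<and>
     (\<forall>i\<in>{1..n}. 0 \<le> u ! (i - 1) \<and> u ! (i - 1) \<le> int n - int i) \<and>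
     (\<forall>i\<in>{1..n}. \<forall>j::nat. int j \<le> u ! (i - 1) \<longrightarrow>
        u ! (i + j - 1) \<le> u ! (i - 1) - int j)"

definition dual_tamari_diagram :: "nat \<Rightarrow> int list \<Rightarrow> bool" where
  "dual_tamari_diagram n v \<longleftrightarrow> length v = n \<and>
     (\<forall>i\<in>{1..n}. 0 \<le> v ! (i - 1) \<and> v ! (i - 1) \<le> int i - 1) \<and>
     (\<forall>i\<in>{1..n}. \<forall>j::nat. int j \<le> v ! (i - 1) \<longrightarrow>
        v ! (i - j - 1) \<le> v ! (i - 1) - int j)"

definition tamari_interval_diagram :: "nat \<Rightarrow> int list \<Rightarrow> int list \<Rightarrow> bool" where
  "tamari_interval_diagram n u v \<longleftrightarrow> tamari_diagram n u \<and> dual_tamari_diagram n v \<and>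
     (\<forall>i j. 1 \<le> i \<and> i < j \<and> j \<le> n \<and> int (j - i) \<le> u ! (i - 1) \<longrightarrow>
        v ! (j - 1) < int (j - i))"

definition cc_u :: "int list \<Rightarrow> int list" where
  "cc_u c = map (\<lambda>x. max x 0) c @ [0]"

definition cc_v :: "int list \<Rightarrow> int list" where
  "cc_v c = 0 # map (\<lambda>x. \<bar>min x 0\<bar>) c"

definition CC :: "nat \<Rightarrow> int list set" where
  "CC n = {c. length c = n - 1 \<and> tamari_interval_diagram n (cc_u c) (cc_v c)}"

definition synchronized :: "int list \<Rightarrow> bool" where
  "synchronized c \<longleftrightarrow> (\<forall>x\<in>set c. x \<noteq> 0)"

definition CC_sync :: "nat \<Rightarrow> int list set" where
  "CC_sync n = {c \<in> CC n. synchronized c}"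

definition up_defined :: "nat \<Rightarrow> nat \<Rightarrow> int list \<Rightarrow> bool" where
  "up_defined n i c \<longleftrightarrow> (\<exists>t. t > c ! (i - 1) \<and> c[i - 1 := t] \<in> CC n)"

definition min_increase :: "nat \<Rightarrow> nat \<Rightarrow> int list \<Rightarrow> int list" where
  "min_increase n i c = c[i - 1 := (LEAST t. t > c ! (i - 1) \<and> c[i - 1 := t] \<in> CC n)]"

definition minimal_cellular :: "nat \<Rightarrow> int list \<Rightarrow> bool" where
  "minimal_cellular n c \<longleftrightarrow> c \<in> CC n \<and> (\<forall>i\<in>{1..n - 1}. up_defined n i c)"

text \<open>c^M = up_1 (up_2 ( ... (up_{n-1} c^m)...)).\<close>
definition max_correspondent :: "nat \<Rightarrow> int list \<Rightarrow> int list" where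
  "max_correspondent n c = foldr (min_increase n) [1..<n] c"

definition cells :: "nat \<Rightarrow> (int list \<times> int list) set" where
  "cells n = {(cm, max_correspondent n cm) | cm. minimal_cellular n cm}"

definition gamma :: "int \<Rightarrow> int \<Rightarrow> int" where
  "gamma a b = (if a < 0 then a else b)"

definition Gamma :: "int list \<times> int list \<Rightarrow> int list" where
  "Gamma p = map2 gamma (fst p) (snd p)"

end

theory Submission
  imports Defs
begin

text \<open>
  Draw a cubic coordinate \<open>c\<close> as a system of arcs: a positive entry \<open>c\<^sub>i\<close> is an arc from
  \<open>i\<close> to \<open>i + c\<^sub>i\<close>, a negative one an arc from \<open>i + c\<^sub>i\<close> to \<open>i\<close>. Being a cubic coordinate means
  that right arcs are nested, left arcs are nested, and a right arc from \<open>i\<close> passing strictly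
  over \<open>k\<close> forces the left arc of \<open>k\<close> to start at or after \<open>i\<close>.

  For synchronized \<open>s\<close> every entry has a lower and an upper value: a positive arc may shrink
  until it ends just before the first later arc with the same right end, a negative arc
  symmetrically. Any mixture of lower and upper values is again a cubic coordinate, and no value
  strictly between them is. So the all-lower vertex is minimal-cellular, each minimal increase
  (from right to left) switches one entry from its lower to its upper value, the cell is
  \<open>\<langle>all-lower, all-upper\<rangle>\<close>, and \<open>\<Gamma>\<close> of it is \<open>s\<close>.

  Conversely, in a minimal-cellular \<open>c\<close> every nonnegative entry can be raised, which forces
  right arcs starting inside the arc of \<open>i\<close> to end strictly before it. Lengthening each
  nonnegative entry along the chain of consecutive right arcs after it, up to a negative entry
  or to \<open>n\<close>, gives a synchronized coordinate whose all-lower vertex is \<open>c\<close>. Hence \<open>\<Gamma>\<close> is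
  inverted by \<open>s \<mapsto> \<langle>all-lower, all-upper\<rangle>\<close>.
\<close>

section \<open>Cubic coordinates as arc systems\<close>

text \<open>
  \<open>pos_part c i\<close> and \<open>neg_part c i\<close> are the paper's \<open>u\<^sub>i\<close> and \<open>v\<^sub>i\<^sub>+\<^sub>1\<close>. Outside
  \<open>1..length c\<close> both vanish, so positions \<open>0\<close> and \<open>n\<close> carry empty arcs (\<open>v\<^sub>1 = u\<^sub>n = 0\<close>).
\<close>

definition pos_part :: "int list \<Rightarrow> nat \<Rightarrow> int" where
  "pos_part c i = (if 1 \<le> i \<and> i \<le> length c then max (c ! (i - 1)) 0 else 0)"

definition neg_part :: "int list \<Rightarrow> nat \<Rightarrow> int" where
  "neg_part c i = (if 1 \<le> i \<and> i \<le> length c then max (- c ! (i - 1)) 0 else 0)"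

definition right_end :: "int list \<Rightarrow> nat \<Rightarrow> int" where
  "right_end c i = int i + pos_part c i"

definition left_end :: "int list \<Rightarrow> nat \<Rightarrow> int" where
  "left_end c i = int i - neg_part c i"

lemma pos_part_nonneg: "0 \<le> pos_part c i"
  by (simp add: pos_part_def)

lemma neg_part_nonneg: "0 \<le> neg_part c i"
  by (simp add: neg_part_def)

lemma right_end_ge: "int i \<le> right_end c i"
  by (simp add: right_end_def pos_part_nonneg)

lemma left_end_le: "left_end c i \<le> int i"
  by (simp add: left_end_def neg_part_nonneg)

lemma pos_part_or_neg_part_zero: "pos_part c i = 0 \<or> neg_part c i = 0"
  by (auto simp: pos_part_def neg_part_def)

lemma ends_nonneg_entry:
  "1 \<le> i \<Longrightarrow> i \<le> length c \<Longrightarrow> 0 \<le> c ! (i - 1) \<Longrightarrow>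
    right_end c i = int i + c ! (i - 1) \<and> left_end c i = int i"
  by (simp add: right_end_def left_end_def pos_part_def neg_part_def)

lemma ends_nonpos_entry:
  "1 \<le> i \<Longrightarrow> i \<le> length c \<Longrightarrow> c ! (i - 1) \<le> 0 \<Longrightarrow>
    right_end c i = int i \<and> left_end c i = int i + c ! (i - 1)"
  by (simp add: right_end_def left_end_def pos_part_def neg_part_def)

lemma ends_outside: "i = 0 \<or> length c < i \<Longrightarrow> right_end c i = int i \<and> left_end c i = int i"
  by (auto simp: right_end_def left_end_def pos_part_def neg_part_def)

lemma ends_eq_if_nth_eq:
  "1 \<le> i \<Longrightarrow> i \<le> length c \<Longrightarrow> i \<le> length d \<Longrightarrow> c ! (i - 1) = d ! (i - 1) \<Longrightarrow>
    right_end c i = right_end d i \<and> left_end c i = left_end d i"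
  by (simp add: right_end_def left_end_def pos_part_def neg_part_def)

lemma ends_update_other:
  assumes "k \<noteq> i" "1 \<le> i"
  shows "right_end (c[i - 1 := t]) k = right_end c k \<and> left_end (c[i - 1 := t]) k = left_end c k"
proof -
  have "k - 1 \<noteq> i - 1 \<or> k = 0"
    using assms by auto
  then show ?thesis
    by (auto simp: right_end_def left_end_def pos_part_def neg_part_def)
qed

lemma cc_u_nth: "1 \<le> i \<Longrightarrow> i \<le> length c + 1 \<Longrightarrow> cc_u c ! (i - 1) = pos_part c i"
  by (cases "i = length c + 1") (auto simp: cc_u_def pos_part_def nth_append)

lemma cc_v_nth: "i \<le> length c \<Longrightarrow> cc_v c ! i = neg_part c i"
  by (cases i) (auto simp: cc_v_def neg_part_def)

lemma right_ends_if_CC: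
  assumes n: "1 \<le> n" and c: "c \<in> CC n"
  shows "1 \<le> i \<Longrightarrow> i < n \<Longrightarrow> right_end c i \<le> int n"
    and "1 \<le> i \<Longrightarrow> i < k \<Longrightarrow> k < n \<Longrightarrow> int k \<le> right_end c i \<Longrightarrow> right_end c k \<le> right_end c i"
proof -
  have u: "cc_u c ! (i - 1) = pos_part c i" if "1 \<le> i" "i \<le> n" for i
    using that c n cc_u_nth[of i c] by (simp add: CC_def)
  have bound: "\<And>i. i \<in> {1..n} \<Longrightarrow> cc_u c ! (i - 1) \<le> int n - int i"
    and nested: "\<And>i j. i \<in> {1..n} \<Longrightarrow> int j \<le> cc_u c ! (i - 1) \<Longrightarrow>
      cc_u c ! (i + j - 1) \<le> cc_u c ! (i - 1) - int j"
    using c unfolding CC_def tamari_interval_diagram_def tamari_diagram_def by blast+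
  show "right_end c i \<le> int n" if "1 \<le> i" "i < n"
    using bound[of i] u[of i] that by (simp add: right_end_def)
  show "right_end c k \<le> right_end c i" if "1 \<le> i" "i < k" "k < n" "int k \<le> right_end c i"
  proof -
    have "cc_u c ! (i + (k - i) - 1) \<le> pos_part c i - int (k - i)"
      using nested[of i "k - i"] that u[of i] by (simp add: right_end_def)
    then show ?thesis
      using that u[of k] by (simp add: right_end_def)
  qed
qed

lemma left_ends_if_CC:
  assumes n: "1 \<le> n" and c: "c \<in> CC n"
  shows "1 \<le> i \<Longrightarrow> i < n \<Longrightarrow> 0 \<le> left_end c i"
    and "1 \<le> k \<Longrightarrow> k < i \<Longrightarrow> i < n \<Longrightarrow> left_end c i \<le> int k \<Longrightarrow> left_end c i \<le> left_end c k"
proof -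
  have v: "cc_v c ! m = neg_part c m" if "m < n" for m
    using that c by (simp add: CC_def cc_v_nth)
  have bound: "\<And>i. i \<in> {1..n} \<Longrightarrow> cc_v c ! (i - 1) \<le> int i - 1"
    and nested: "\<And>i j. i \<in> {1..n} \<Longrightarrow> int j \<le> cc_v c ! (i - 1) \<Longrightarrow>
      cc_v c ! (i - j - 1) \<le> cc_v c ! (i - 1) - int j"
    using c unfolding CC_def tamari_interval_diagram_def dual_tamari_diagram_def by blast+
  show "0 \<le> left_end c i" if "1 \<le> i" "i < n"
    using bound[of "Suc i"] v[of i] that by (simp add: left_end_def)
  show "left_end c i \<le> left_end c k" if "1 \<le> k" "k < i" "i < n" "left_end c i \<le> int k"
  proof -
    have "cc_v c ! (Suc i - (i - k) - 1) \<le> neg_part c i - int (i - k)"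
      using nested[of "Suc i" "i - k"] that v[of i] by (simp add: left_end_def)
    then show ?thesis
      using that v[of k] by (simp add: left_end_def)
  qed
qed

lemma ends_compatible_if_CC:
  assumes n: "1 \<le> n" and c: "c \<in> CC n"
  shows "1 \<le> i \<Longrightarrow> i < k \<Longrightarrow> k < n \<Longrightarrow> int k < right_end c i \<Longrightarrow> int i \<le> left_end c k"
proof -
  assume ik: "1 \<le> i" "i < k" "k < n" "int k < right_end c i"
  have interval: "\<forall>i j. 1 \<le> i \<and> i < j \<and> j \<le> n \<and> int (j - i) \<le> cc_u c ! (i - 1) \<longrightarrow>
      cc_v c ! (j - 1) < int (j - i)"
    using c unfolding CC_def tamari_interval_diagram_def by blast
  have "cc_v c ! (Suc k - 1) < int (Suc k - i)"
    using interval[rule_format, of i "Suc k"] c ik n cc_u_nth[of i c] by (simp add: CC_def right_end_def)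
  then show "int i \<le> left_end c k"
    using c ik cc_v_nth[of k c] by (simp add: CC_def left_end_def)
qed

locale arc_coord =
  fixes n :: nat and c :: "int list"
  assumes size_pos: "1 \<le> n"
    and length_coord: "length c = n - 1"
    and right_end_le: "\<And>i. 1 \<le> i \<Longrightarrow> i < n \<Longrightarrow> right_end c i \<le> int n"
    and right_end_nested: "\<And>i k. 1 \<le> i \<Longrightarrow> i < k \<Longrightarrow> k < n \<Longrightarrow>
      int k \<le> right_end c i \<Longrightarrow> right_end c k \<le> right_end c i"
    and left_end_nonneg: "\<And>i. 1 \<le> i \<Longrightarrow> i < n \<Longrightarrow> 0 \<le> left_end c i"
    and left_end_nested: "\<And>i k. 1 \<le> k \<Longrightarrow> k < i \<Longrightarrow> i < n \<Longrightarrow>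
      left_end c i \<le> int k \<Longrightarrow> left_end c i \<le> left_end c k"
    and ends_compatible: "\<And>i k. 1 \<le> i \<Longrightarrow> i < k \<Longrightarrow> k < n \<Longrightarrow>
      int k < right_end c i \<Longrightarrow> int i \<le> left_end c k"
begin

lemma tamari_diagram_cc_u: "tamari_diagram n (cc_u c)"
  unfolding tamari_diagram_def
proof (intro conjI ballI allI impI)
  have u: "cc_u c ! (i - 1) = pos_part c i" if "1 \<le> i" "i \<le> n" for i
    using that length_coord size_pos cc_u_nth[of i c] by simp
  have u_last: "pos_part c n = 0"
    using length_coord size_pos by (auto simp: pos_part_def)
  have bound: "pos_part c i \<le> int n - int i" if "1 \<le> i" "i \<le> n" for i
    using right_end_le[of i] that u_last by (cases "i = n") (auto simp: right_end_def)
  show "length (cc_u c) = n"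
    using length_coord size_pos by (simp add: cc_u_def)
  fix i assume i: "i \<in> {1..n}"
  then show "0 \<le> cc_u c ! (i - 1)" and "cc_u c ! (i - 1) \<le> int n - int i"
    using u[of i] bound[of i] pos_part_nonneg[of c i] by auto
  fix j assume j: "int j \<le> cc_u c ! (i - 1)"
  show "cc_u c ! (i + j - 1) \<le> cc_u c ! (i - 1) - int j"
  proof (cases "j = 0")
    case False
    then have "i < n" "i + j \<le> n"
      using i u_last u[of i] bound[of i] j by (cases "i = n"; simp)+
    moreover have "right_end c (i + j) \<le> right_end c i" if "i + j < n"
      using right_end_nested[of i "i + j"] that i u[of i] j False by (simp add: right_end_def)
    ultimately show ?thesis
      using u[of i] u[of "i + j"] u_last i j by (cases "i + j = n") (auto simp: right_end_def)
  qed simp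
qed

lemma dual_tamari_diagram_cc_v: "dual_tamari_diagram n (cc_v c)"
  unfolding dual_tamari_diagram_def
proof (intro conjI ballI allI impI)
  have v: "cc_v c ! m = neg_part c m" if "m < n" for m
    using that length_coord by (simp add: cc_v_nth)
  have bound: "neg_part c m \<le> int m" if "m < n" for m
    using left_end_nonneg[of m] that by (cases "m = 0") (auto simp: left_end_def neg_part_def)
  show "length (cc_v c) = n"
    using length_coord size_pos by (simp add: cc_v_def)
  fix i assume i: "i \<in> {1..n}"
  then show "0 \<le> cc_v c ! (i - 1)" and "cc_v c ! (i - 1) \<le> int i - 1"
    using v[of "i - 1"] bound[of "i - 1"] neg_part_nonneg[of c "i - 1"] by auto
  fix j assume j: "int j \<le> cc_v c ! (i - 1)"
  define m where "m = i - 1"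
  have m: "m < n" "i - j - 1 = m - j" "cc_v c ! (i - 1) = neg_part c m"
    using i v by (auto simp: m_def)
  show "cc_v c ! (i - j - 1) \<le> cc_v c ! (i - 1) - int j"
  proof (cases "0 < j \<and> j < m")
    case True
    then have "1 \<le> m - j" "m - j < m"
      by auto
    then have "left_end c m \<le> left_end c (m - j)"
      using left_end_nested[of "m - j" m] m j by (simp add: left_end_def)
    then show ?thesis
      using True m v[of "m - j"] by (simp add: left_end_def)
  next
    case False
    then have "j = 0 \<or> j = m"
      using bound[OF m(1)] m j by auto
    then show ?thesis
      using m v[of 0] j by (auto simp: neg_part_def)
  qed
qed

lemma in_CC: "c \<in> CC n"
proof -
  have "cc_v c ! (j - 1) < int (j - i)"
    if ij: "1 \<le> i" "i < j" "j \<le> n" "int (j - i) \<le> cc_u c ! (i - 1)" for i j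
  proof -
    have u: "cc_u c ! (i - 1) = pos_part c i" and v: "cc_v c ! (j - 1) = neg_part c (j - 1)"
      using ij length_coord size_pos cc_u_nth[of i c] cc_v_nth[of "j - 1" c] by simp_all
    show ?thesis
    proof (cases "j = Suc i")
      case True
      then show ?thesis
        using ij u v pos_part_or_neg_part_zero[of c i] by auto
    next
      case False
      then have "i < j - 1" "j - 1 < n" "int (j - i) = int j - int i"
        using ij by auto
      then show ?thesis
        using ends_compatible[of i "j - 1"] ij u v by (simp add: right_end_def left_end_def)
    qed
  qed
  then show ?thesis
    unfolding CC_def tamari_interval_diagram_def
    using length_coord tamari_diagram_cc_u dual_tamari_diagram_cc_v by blast
qed

end

lemma CC_iff_arc_coord:
  assumes n: "1 \<le> n"
  shows "c \<in> CC n \<longleftrightarrow> arc_coord n c"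
proof
  assume c: "c \<in> CC n"
  show "arc_coord n c"
    using right_ends_if_CC[OF n c] left_ends_if_CC[OF n c] ends_compatible_if_CC[OF n c] n c
    by unfold_locales (simp_all add: CC_def)
qed (rule arc_coord.in_CC)

section \<open>The cell of a synchronized cubic coordinate\<close>

definition right_twin :: "int list \<Rightarrow> nat \<Rightarrow> nat" where
  "right_twin s i = (LEAST k. i < k \<and> right_end s k = right_end s i)"

definition left_twin :: "int list \<Rightarrow> nat \<Rightarrow> nat" where
  "left_twin s i = (GREATEST k. k < i \<and> left_end s k = left_end s i)"

definition lower_entry :: "int list \<Rightarrow> nat \<Rightarrow> int" where
  "lower_entry s i = (if s ! (i - 1) < 0 then s ! (i - 1) else int (right_twin s i) - 1 - int i)"

definition upper_entry :: "int list \<Rightarrow> nat \<Rightarrow> int" where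
  "upper_entry s i = (if 0 < s ! (i - 1) then s ! (i - 1) else int (left_twin s i) + 1 - int i)"

definition vertex :: "int list \<Rightarrow> nat \<Rightarrow> int list" where
  "vertex s j = map (\<lambda>k. if k < j then lower_entry s k else upper_entry s k) [1..<length s + 1]"

definition cell_vertex :: "int list \<Rightarrow> int list \<Rightarrow> bool" where
  "cell_vertex s x \<longleftrightarrow> length x = length s \<and>
     (\<forall>i. 1 \<le> i \<and> i \<le> length s \<longrightarrow> x ! (i - 1) = lower_entry s i \<or> x ! (i - 1) = upper_entry s i)"

lemma length_vertex: "length (vertex s j) = length s"
  by (simp add: vertex_def del: upt_Suc)

lemma vertex_nth:
  "1 \<le> i \<Longrightarrow> i \<le> length s \<Longrightarrow>
    vertex s j ! (i - 1) = (if i < j then lower_entry s i else upper_entry s i)"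
  by (simp add: vertex_def nth_upt del: upt_Suc)

lemma cell_vertex_vertex: "cell_vertex s (vertex s j)"
  unfolding cell_vertex_def using vertex_nth[of _ s j] by (auto simp: length_vertex)

lemma cell_vertex_update_upper:
  assumes x: "cell_vertex s x" and i: "1 \<le> i" "i \<le> length s"
  shows "cell_vertex s (x[i - 1 := upper_entry s i])"
  unfolding cell_vertex_def
proof (intro conjI allI impI)
  show "length (x[i - 1 := upper_entry s i]) = length s"
    using x by (simp add: cell_vertex_def)
  fix k assume k: "1 \<le> k \<and> k \<le> length s"
  show "x[i - 1 := upper_entry s i] ! (k - 1) = lower_entry s k \<or>
    x[i - 1 := upper_entry s i] ! (k - 1) = upper_entry s k"
  proof (cases "k = i")
    case True
    then show ?thesis
      using x i by (simp add: cell_vertex_def)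
  next
    case False
    then have "k - 1 \<noteq> i - 1"
      using k i by auto
    then show ?thesis
      using x k by (simp add: cell_vertex_def)
  qed
qed

lemma vertex_update_upper:
  assumes i: "1 \<le> i" "i \<le> length s"
  shows "(vertex s (i + 1))[i - 1 := upper_entry s i] = vertex s i"
proof (rule nth_equalityI)
  show "length ((vertex s (i + 1))[i - 1 := upper_entry s i]) = length (vertex s i)"
    by (simp add: length_vertex)
  fix m assume "m < length ((vertex s (i + 1))[i - 1 := upper_entry s i])"
  then have m: "1 \<le> m + 1" "m + 1 \<le> length s"
    by (simp_all add: length_vertex)
  then show "(vertex s (i + 1))[i - 1 := upper_entry s i] ! m = vertex s i ! m"
    using vertex_nth[OF m, of i] vertex_nth[OF m, of "i + 1"] i
    by (auto simp: nth_list_update length_vertex)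
qed

locale sync_coord = arc_coord n s for n :: nat and s :: "int list" +
  assumes entry_nonzero: "\<And>i. 1 \<le> i \<Longrightarrow> i < n \<Longrightarrow> s ! (i - 1) \<noteq> 0"
begin

lemma right_twin_exists:
  assumes i: "1 \<le> i" "i < n" and pos: "0 < s ! (i - 1)"
  shows "i < right_twin s i \<and> right_end s (right_twin s i) = right_end s i \<and>
    int (right_twin s i) \<le> right_end s i"
proof -
  define r where "r = nat (right_end s i)"
  have r: "int r = right_end s i" "i < r" "r \<le> n"
    using ends_nonneg_entry[of i s] i pos length_coord right_end_le[OF i] by (auto simp: r_def)
  have "right_end s r = right_end s i"
  proof (cases "r < n")
    case True
    then show ?thesis
      using right_end_nested[OF i(1) r(2) True] r right_end_ge[of r s] by simp
  next
    case False
    then show ?thesis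
      using r ends_outside[of r s] length_coord by simp
  qed
  then have witness: "i < r \<and> right_end s r = right_end s i"
    using r by simp
  have "right_twin s i \<le> r"
    unfolding right_twin_def by (rule Least_le) (rule witness)
  moreover have "i < right_twin s i \<and> right_end s (right_twin s i) = right_end s i"
    unfolding right_twin_def by (rule LeastI) (rule witness)
  ultimately show ?thesis
    using r by simp
qed

lemma right_end_before_right_twin:
  assumes i: "1 \<le> i" "i < n" and pos: "0 < s ! (i - 1)" and k: "i < k" "k < right_twin s i"
  shows "right_end s k < int (right_twin s i)"
proof -
  note twin = right_twin_exists[OF i pos]
  have kn: "k < n"
    using k twin right_end_le[OF i] by linarith
  have "right_end s k \<noteq> right_end s i"
    using not_less_Least[of k "\<lambda>k. i < k \<and> right_end s k = right_end s i"] k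
    by (auto simp: right_twin_def)
  moreover have "right_end s k \<le> right_end s i"
    using right_end_nested[OF i(1) k(1) kn] k twin by simp
  ultimately have less: "right_end s k < right_end s i"
    by simp
  show ?thesis
  proof (rule ccontr)
    assume "\<not> ?thesis"
    then have "int (right_twin s i) \<le> right_end s k"
      by simp
    then show False
      using right_end_nested[of k "right_twin s i"] right_end_le[OF i] k kn twin less i
      by (cases "right_twin s i < n") auto
  qed
qed

lemma left_twin_exists:
  assumes i: "1 \<le> i" "i < n" and neg: "s ! (i - 1) < 0"
  shows "left_twin s i < i \<and> left_end s (left_twin s i) = left_end s i \<and>
    left_end s i \<le> int (left_twin s i)"
proof -
  define l where "l = nat (left_end s i)"
  have l: "int l = left_end s i" "l < i"
    using ends_nonpos_entry[of i s] i neg length_coord left_end_nonneg[OF i] by (auto simp: l_def)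
  have "left_end s l = left_end s i"
  proof (cases "l = 0")
    case True
    then show ?thesis
      using l ends_outside[of l s] by simp
  next
    case False
    then show ?thesis
      using left_end_nested[of l i] l i left_end_le[of s l] by simp
  qed
  then have witness: "l < i \<and> left_end s l = left_end s i"
    using l by simp
  let ?twin = "\<lambda>k. k < i \<and> left_end s k = left_end s i"
  have "l \<le> left_twin s i"
    using Greatest_le_nat[of ?twin l i] witness by (auto simp: left_twin_def)
  moreover have "?twin (left_twin s i)"
    using GreatestI_nat[of ?twin l i] witness by (auto simp: left_twin_def)
  ultimately show ?thesis
    using l by simp
qed

lemma left_end_after_left_twin:
  assumes i: "1 \<le> i" "i < n" and neg: "s ! (i - 1) < 0" and k: "left_twin s i < k" "k < i"
  shows "int (left_twin s i) < left_end s k"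
proof -
  note twin = left_twin_exists[OF i neg]
  have "left_end s k \<noteq> left_end s i"
  proof
    assume "left_end s k = left_end s i"
    then have "k \<le> left_twin s i"
      using Greatest_le_nat[of "\<lambda>k. k < i \<and> left_end s k = left_end s i" k i] k
      by (auto simp: left_twin_def)
    then show False
      using k by simp
  qed
  moreover have "left_end s i \<le> left_end s k"
    using left_end_nested[of k i] k twin i by simp
  ultimately have less: "left_end s i < left_end s k"
    by simp
  show ?thesis
  proof (rule ccontr)
    assume "\<not> ?thesis"
    then have "left_end s k \<le> int (left_twin s i)"
      by simp
    then show False
      using left_end_nested[of "left_twin s i" k] left_end_nonneg[OF i] k twin less i
      by (cases "left_twin s i = 0") auto
  qed
qed

lemma lower_entry_nonneg:
  assumes i: "1 \<le> i" "i < n" and pos: "0 < s ! (i - 1)"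
  shows "0 \<le> lower_entry s i"
  using right_twin_exists[OF i pos] pos by (simp add: lower_entry_def)

lemma ends_lower_entry:
  assumes i: "1 \<le> i" "i < n" and x: "length x = n - 1" "x ! (i - 1) = lower_entry s i"
  shows "left_end x i = left_end s i \<and>
    right_end x i = (if 0 < s ! (i - 1) then int (right_twin s i) - 1 else right_end s i)"
proof (cases "0 < s ! (i - 1)")
  case True
  then have "0 \<le> x ! (i - 1)" "x ! (i - 1) = int (right_twin s i) - 1 - int i"
    using x lower_entry_nonneg[OF i True] by (auto simp: lower_entry_def)
  then show ?thesis
    using True ends_nonneg_entry[of i x] ends_nonneg_entry[of i s] i x(1) length_coord by simp
next
  case False
  then show ?thesis
    using ends_eq_if_nth_eq[of i x s] entry_nonzero[OF i] i x length_coord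
    by (simp add: lower_entry_def)
qed

lemma ends_upper_entry:
  assumes i: "1 \<le> i" "i < n" and x: "length x = n - 1" "x ! (i - 1) = upper_entry s i"
  shows "right_end x i = right_end s i \<and>
    left_end x i = (if s ! (i - 1) < 0 then int (left_twin s i) + 1 else left_end s i)"
proof (cases "s ! (i - 1) < 0")
  case True
  then have "x ! (i - 1) \<le> 0" "x ! (i - 1) = int (left_twin s i) + 1 - int i"
    using x left_twin_exists[OF i True] by (auto simp: upper_entry_def)
  then show ?thesis
    using True ends_nonpos_entry[of i x] ends_nonpos_entry[of i s] i x(1) length_coord by simp
next
  case False
  then show ?thesis
    using ends_eq_if_nth_eq[of i x s] entry_nonzero[OF i] i x length_coord
    by (simp add: upper_entry_def)
qed

lemma cell_vertex_right_end:
  assumes x: "cell_vertex s x" and i: "1 \<le> i" "i < n"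
  shows "right_end x i \<le> right_end s i \<and>
    (right_end x i = right_end s i \<or> 0 < s ! (i - 1) \<and> right_end x i = int (right_twin s i) - 1)"
proof -
  have len: "length x = n - 1"
    using x length_coord by (simp add: cell_vertex_def)
  consider "x ! (i - 1) = lower_entry s i" | "x ! (i - 1) = upper_entry s i"
    using x i length_coord by (auto simp: cell_vertex_def)
  then show ?thesis
  proof cases
    case 1
    then show ?thesis
      using ends_lower_entry[OF i len 1] right_twin_exists[OF i]
      by (cases "0 < s ! (i - 1)") auto
  next
    case 2
    then show ?thesis
      using ends_upper_entry[OF i len 2] by simp
  qed
qed

lemma cell_vertex_left_end:
  assumes x: "cell_vertex s x" and i: "1 \<le> i" "i < n"
  shows "left_end s i \<le> left_end x i \<and>
    (left_end x i = left_end s i \<or> s ! (i - 1) < 0 \<and> left_end x i = int (left_twin s i) + 1)"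
proof -
  have len: "length x = n - 1"
    using x length_coord by (simp add: cell_vertex_def)
  consider "x ! (i - 1) = lower_entry s i" | "x ! (i - 1) = upper_entry s i"
    using x i length_coord by (auto simp: cell_vertex_def)
  then show ?thesis
  proof cases
    case 1
    then show ?thesis
      using ends_lower_entry[OF i len 1] by simp
  next
    case 2
    then show ?thesis
      using ends_upper_entry[OF i len 2] left_twin_exists[OF i]
      by (cases "s ! (i - 1) < 0") auto
  qed
qed

lemma cell_vertex_right_end_nested:
  assumes x: "cell_vertex s x" and ik: "1 \<le> i" "i < k" "k < n" and reach: "int k \<le> right_end x i"
  shows "right_end x k \<le> right_end x i"
proof -
  have k_end: "right_end x k \<le> right_end s k"
    using cell_vertex_right_end[OF x, of k] ik by simp
  consider "right_end x i = right_end s i"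
    | "0 < s ! (i - 1)" "right_end x i = int (right_twin s i) - 1"
    using cell_vertex_right_end[OF x, of i] ik by auto
  then show ?thesis
  proof cases
    case 1
    then show ?thesis
      using right_end_nested[OF ik] reach k_end by simp
  next
    case 2
    then have "right_end s k < int (right_twin s i)"
      using right_end_before_right_twin[of i k] ik reach by simp
    then show ?thesis
      using 2 k_end by simp
  qed
qed

lemma cell_vertex_left_end_nested:
  assumes x: "cell_vertex s x" and ik: "1 \<le> k" "k < i" "i < n" and reach: "left_end x i \<le> int k"
  shows "left_end x i \<le> left_end x k"
proof -
  have k_end: "left_end s k \<le> left_end x k"
    using cell_vertex_left_end[OF x, of k] ik by simp
  consider "left_end x i = left_end s i"
    | "s ! (i - 1) < 0" "left_end x i = int (left_twin s i) + 1"
    using cell_vertex_left_end[OF x, of i] ik by auto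
  then show ?thesis
  proof cases
    case 1
    then show ?thesis
      using left_end_nested[OF ik] reach k_end by simp
  next
    case 2
    then have "int (left_twin s i) < left_end s k"
      using left_end_after_left_twin[of i k] ik reach by simp
    then show ?thesis
      using 2 k_end by simp
  qed
qed

lemma cell_vertex_arc_coord:
  assumes x: "cell_vertex s x"
  shows "arc_coord n x"
proof
  show "1 \<le> n" "length x = n - 1"
    using x size_pos length_coord by (simp_all add: cell_vertex_def)
next
  fix i assume i: "1 \<le> i" "i < n"
  show "right_end x i \<le> int n"
    using cell_vertex_right_end[OF x i] right_end_le[OF i] by simp
  show "0 \<le> left_end x i"
    using cell_vertex_left_end[OF x i] left_end_nonneg[OF i] by simp
next
  fix i k assume "1 \<le> i" "i < k" "k < n" "int k \<le> right_end x i"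
  then show "right_end x k \<le> right_end x i"
    by (rule cell_vertex_right_end_nested[OF x])
next
  fix i k assume "1 \<le> k" "k < i" "i < n" "left_end x i \<le> int k"
  then show "left_end x i \<le> left_end x k"
    by (rule cell_vertex_left_end_nested[OF x])
next
  fix i k assume ik: "1 \<le> i" "i < k" "k < n" and "int k < right_end x i"
  moreover have "right_end x i \<le> right_end s i" "left_end s k \<le> left_end x k"
    using cell_vertex_right_end[OF x, of i] cell_vertex_left_end[OF x, of k] ik by simp_all
  ultimately show "int i \<le> left_end x k"
    using ends_compatible[OF ik] by simp
qed

lemma cell_vertex_in_CC: "cell_vertex s x \<Longrightarrow> x \<in> CC n"
  using cell_vertex_arc_coord CC_iff_arc_coord[OF size_pos] by blast

lemma lower_entry_less_upper_entry:
  assumes i: "1 \<le> i" "i < n"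
  shows "lower_entry s i < upper_entry s i"
proof (cases "0 < s ! (i - 1)")
  case True
  then show ?thesis
    using right_twin_exists[OF i True] ends_nonneg_entry[of i s] i length_coord
    by (simp add: lower_entry_def upper_entry_def)
next
  case False
  then have "s ! (i - 1) < 0"
    using entry_nonzero[OF i] by simp
  then show ?thesis
    using left_twin_exists[OF i] ends_nonpos_entry[of i s] i length_coord
    by (simp add: lower_entry_def upper_entry_def)
qed

lemma right_end_reaching_right_twin:
  assumes y: "arc_coord n y" and i: "1 \<le> i" "i < n" and pos: "0 < s ! (i - 1)"
    and reach: "int (right_twin s i) \<le> right_end y i"
    and same: "right_twin s i < n \<Longrightarrow> right_end y (right_twin s i) = right_end s (right_twin s i)"
  shows "right_end s i \<le> right_end y i"
proof (cases "right_twin s i < n")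
  case True
  then show ?thesis
    using arc_coord.right_end_nested[OF y i(1) _ True reach] same right_twin_exists[OF i pos]
    by simp
next
  case False
  then show ?thesis
    using right_twin_exists[OF i pos] right_end_le[OF i] reach by linarith
qed

lemma left_end_reaching_left_twin:
  assumes y: "arc_coord n y" and i: "1 \<le> i" "i < n" and neg: "s ! (i - 1) < 0"
    and reach: "left_end y i \<le> int (left_twin s i)"
    and same: "1 \<le> left_twin s i \<Longrightarrow> left_end y (left_twin s i) = left_end s (left_twin s i)"
  shows "left_end y i \<le> left_end s i"
proof (cases "1 \<le> left_twin s i")
  case True
  then show ?thesis
    using arc_coord.left_end_nested[OF y True _ i(2) reach] same left_twin_exists[OF i neg]
    by simp
next
  case False
  then show ?thesis
    using left_twin_exists[OF i neg] left_end_nonneg[OF i] reach by simp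
qed

lemma upper_entry_le_if_pos:
  assumes y: "arc_coord n y" "length y = n - 1" and i: "1 \<le> i" "i < n" and pos: "0 < s ! (i - 1)"
    and t: "y ! (i - 1) = t" "lower_entry s i < t"
    and twin_upper: "right_twin s i < n \<Longrightarrow>
      y ! (right_twin s i - 1) = upper_entry s (right_twin s i)"
  shows "upper_entry s i \<le> t"
proof -
  note twin = right_twin_exists[OF i pos]
  have "0 < t" "int (right_twin s i) \<le> int i + t"
    using t twin pos by (simp_all add: lower_entry_def)
  moreover have "right_end y i = int i + t"
    using ends_nonneg_entry[of i y] t y(2) i \<open>0 < t\<close> by simp
  moreover have "right_end y (right_twin s i) = right_end s (right_twin s i)"
    if "right_twin s i < n"
    using ends_upper_entry[OF _ that y(2)] twin_upper that twin by simp
  ultimately have "right_end s i \<le> int i + t"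
    using right_end_reaching_right_twin[OF y(1) i pos] by simp
  then show ?thesis
    using pos ends_nonneg_entry[of i s] i length_coord by (simp add: upper_entry_def)
qed

lemma lower_entry_ge_if_neg:
  assumes y: "arc_coord n y" "length y = n - 1" and i: "1 \<le> i" "i < n" and neg: "s ! (i - 1) < 0"
    and t: "y ! (i - 1) = t" "t < upper_entry s i"
    and twin_lower: "1 \<le> left_twin s i \<Longrightarrow>
      y ! (left_twin s i - 1) = lower_entry s (left_twin s i)"
  shows "t \<le> lower_entry s i"
proof -
  note twin = left_twin_exists[OF i neg]
  have "t < 0" "int i + t \<le> int (left_twin s i)"
    using t twin neg by (simp_all add: upper_entry_def)
  moreover have "left_end y i = int i + t"
    using ends_nonpos_entry[of i y] t y(2) i \<open>t < 0\<close> by simp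
  moreover have "left_end y (left_twin s i) = left_end s (left_twin s i)"
    if "1 \<le> left_twin s i"
    using ends_lower_entry[OF that _ y(2)] twin_lower that twin i by simp
  ultimately have "int i + t \<le> left_end s i"
    using left_end_reaching_left_twin[OF y(1) i neg] by simp
  then show ?thesis
    using neg ends_nonpos_entry[of i s] i length_coord by (simp add: lower_entry_def)
qed

lemma no_coord_between_lower_and_upper:
  assumes i: "1 \<le> i" "i < n" and t: "lower_entry s i < t" "t < upper_entry s i"
  shows "(vertex s (i + 1))[i - 1 := t] \<notin> CC n"
proof
  define y where "y = (vertex s (i + 1))[i - 1 := t]"
  assume "(vertex s (i + 1))[i - 1 := t] \<in> CC n"
  then have y: "arc_coord n y" "length y = n - 1"
    using CC_iff_arc_coord size_pos length_coord y_def by (simp_all add: length_vertex)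
  have y_i: "y ! (i - 1) = t"
    using i length_coord by (simp add: y_def length_vertex)
  have y_other: "y ! (k - 1) = (if k < i + 1 then lower_entry s k else upper_entry s k)"
    if "1 \<le> k" "k < n" "k \<noteq> i" for k
    using that i length_coord vertex_nth[of k s "i + 1"] by (simp add: y_def)
  show False
  proof (cases "0 < s ! (i - 1)")
    case True
    then show False
      using upper_entry_le_if_pos[OF y i True y_i t(1)] y_other right_twin_exists[OF i True] t(2)
      by fastforce
  next
    case False
    then have "s ! (i - 1) < 0"
      using entry_nonzero[OF i] by simp
    then show False
      using lower_entry_ge_if_neg[OF y i _ y_i t(2)] y_other left_twin_exists[OF i] i t(1)
      by fastforce
  qed
qed

lemma min_increase_vertex:
  assumes i: "1 \<le> i" "i < n"
  shows "min_increase n i (vertex s (i + 1)) = vertex s i"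
proof -
  have entry: "vertex s (i + 1) ! (i - 1) = lower_entry s i"
    using i length_coord vertex_nth[of i s "i + 1"] by simp
  have "(LEAST t. vertex s (i + 1) ! (i - 1) < t \<and> (vertex s (i + 1))[i - 1 := t] \<in> CC n) =
    upper_entry s i"
  proof (rule Least_equality)
    show "vertex s (i + 1) ! (i - 1) < upper_entry s i \<and>
      (vertex s (i + 1))[i - 1 := upper_entry s i] \<in> CC n"
      using entry lower_entry_less_upper_entry[OF i] vertex_update_upper[of i s] i length_coord
        cell_vertex_in_CC[OF cell_vertex_vertex]
      by simp
  next
    fix t
    assume "vertex s (i + 1) ! (i - 1) < t \<and> (vertex s (i + 1))[i - 1 := t] \<in> CC n"
    then show "upper_entry s i \<le> t"
      using no_coord_between_lower_and_upper[OF i, of t] entry by force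
  qed
  then show ?thesis
    using vertex_update_upper[of i s] i length_coord by (simp add: min_increase_def)
qed

lemma foldr_min_increase_vertex:
  assumes "1 \<le> j" "j \<le> n"
  shows "foldr (min_increase n) [j..<n] (vertex s n) = vertex s j"
  using assms(2,1)
proof (induction j rule: inc_induct)
  case base
  then show ?case
    by simp
next
  case (step m)
  then have "foldr (min_increase n) [m..<n] (vertex s n) = min_increase n m (vertex s (m + 1))"
    by (simp add: upt_conv_Cons)
  also have "\<dots> = vertex s m"
    using min_increase_vertex step by simp
  finally show ?case .
qed

lemma max_correspondent_vertex: "max_correspondent n (vertex s n) = vertex s 1"
  using foldr_min_increase_vertex[of 1] size_pos by (simp add: max_correspondent_def)

lemma minimal_cellular_vertex: "minimal_cellular n (vertex s n)"
  unfolding minimal_cellular_def up_defined_def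
proof (intro conjI ballI)
  show "vertex s n \<in> CC n"
    by (rule cell_vertex_in_CC[OF cell_vertex_vertex])
  fix i assume "i \<in> {1..n - 1}"
  then have i: "1 \<le> i" "i < n"
    by auto
  have "vertex s n ! (i - 1) < upper_entry s i"
    using i length_coord lower_entry_less_upper_entry[OF i] vertex_nth[of i s n] by simp
  moreover have "(vertex s n)[i - 1 := upper_entry s i] \<in> CC n"
    using cell_vertex_in_CC cell_vertex_update_upper[OF cell_vertex_vertex] i length_coord by simp
  ultimately show "\<exists>t > vertex s n ! (i - 1). (vertex s n)[i - 1 := t] \<in> CC n"
    by blast
qed

lemma Gamma_vertex: "Gamma (vertex s n, vertex s 1) = s"
proof (rule nth_equalityI)
  show "length (Gamma (vertex s n, vertex s 1)) = length s"
    by (simp add: Gamma_def length_vertex)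
  fix m assume "m < length (Gamma (vertex s n, vertex s 1))"
  then have i: "1 \<le> m + 1" "m + 1 < n"
    using length_coord by (simp_all add: Gamma_def length_vertex)
  have "Gamma (vertex s n, vertex s 1) ! m = gamma (lower_entry s (m + 1)) (upper_entry s (m + 1))"
    using vertex_nth[of "m + 1" s n] vertex_nth[of "m + 1" s 1] i length_coord
    by (simp add: Gamma_def length_vertex)
  also have "\<dots> = s ! m"
    using lower_entry_nonneg[OF i] entry_nonzero[OF i]
    by (auto simp: gamma_def lower_entry_def upper_entry_def)
  finally show "Gamma (vertex s n, vertex s 1) ! m = s ! m" .
qed

lemma vertex_pair_in_cells: "(vertex s n, vertex s 1) \<in> cells n"
  using minimal_cellular_vertex max_correspondent_vertex by (force simp: cells_def)

end

lemma CC_sync_iff_sync_coord: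
  assumes n: "1 \<le> n"
  shows "s \<in> CC_sync n \<longleftrightarrow> sync_coord n s"
proof -
  have "synchronized s \<longleftrightarrow> (\<forall>i. 1 \<le> i \<longrightarrow> i < n \<longrightarrow> s ! (i - 1) \<noteq> 0)" if "length s = n - 1"
  proof -
    have "synchronized s \<longleftrightarrow> (\<forall>m < n - 1. s ! m \<noteq> 0)"
      using that by (simp add: synchronized_def all_set_conv_all_nth)
    also have "\<dots> \<longleftrightarrow> (\<forall>i. 1 \<le> i \<longrightarrow> i < n \<longrightarrow> s ! (i - 1) \<noteq> 0)"
    proof
      assume "\<forall>m < n - 1. s ! m \<noteq> 0"
      then show "\<forall>i. 1 \<le> i \<longrightarrow> i < n \<longrightarrow> s ! (i - 1) \<noteq> 0"
        by auto
    next
      assume nonzero: "\<forall>i. 1 \<le> i \<longrightarrow> i < n \<longrightarrow> s ! (i - 1) \<noteq> 0"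
      show "\<forall>m < n - 1. s ! m \<noteq> 0"
        using nonzero[rule_format, of "Suc _"] by auto
    qed
    finally show ?thesis .
  qed
  then show ?thesis
    using CC_iff_arc_coord[OF n]
    by (auto simp: CC_sync_def sync_coord_def sync_coord_axioms_def arc_coord.length_coord)
qed

section \<open>The synchronized coordinate of a minimal-cellular coordinate\<close>

text \<open>\<open>chain_end c j\<close> becomes the right end of position \<open>j\<close> in \<open>synchronize c\<close>.\<close>

function chain_end :: "int list \<Rightarrow> nat \<Rightarrow> nat" where
  "chain_end c j =
    (if j = 0 \<or> length c < j \<or> c ! (j - 1) < 0 then j else chain_end c (nat (right_end c j) + 1))"
  by auto
termination
proof (relation "measure (\<lambda>(c, j). Suc (length c) - j)")
  fix c :: "int list" and j :: nat
  assume "\<not> (j = 0 \<or> length c < j \<or> c ! (j - 1) < 0)"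
  moreover have "int j \<le> right_end c j"
    by (rule right_end_ge)
  ultimately show "((c, nat (right_end c j) + 1), c, j) \<in> measure (\<lambda>(c, j). Suc (length c) - j)"
    by simp arith
qed simp

declare chain_end.simps [simp del]

definition synchronize :: "int list \<Rightarrow> int list" where
  "synchronize c =
    map (\<lambda>i. if c ! (i - 1) < 0 then c ! (i - 1) else int (chain_end c i) - int i) [1..<length c + 1]"

lemma length_synchronize: "length (synchronize c) = length c"
  by (simp add: synchronize_def del: upt_Suc)

lemma synchronize_nth:
  "1 \<le> i \<Longrightarrow> i \<le> length c \<Longrightarrow>
    synchronize c ! (i - 1) = (if c ! (i - 1) < 0 then c ! (i - 1) else int (chain_end c i) - int i)"
  by (simp add: synchronize_def nth_upt del: upt_Suc)

locale min_cell_coord = arc_coord +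
  assumes nonneg_entry_raisable:
    "\<And>i. 1 \<le> i \<Longrightarrow> i < n \<Longrightarrow> 0 \<le> c ! (i - 1) \<Longrightarrow> \<exists>t > c ! (i - 1). c[i - 1 := t] \<in> CC n"
begin

text \<open>Minimal-cellularity is used only through this lemma.\<close>

lemma raised_coord:
  assumes i: "1 \<le> i" "i < n" and nonneg: "0 \<le> c ! (i - 1)"
  obtains y where "arc_coord n y" "right_end c i < right_end y i"
    "\<And>k. k \<noteq> i \<Longrightarrow> right_end y k = right_end c k" "\<And>k. left_end y k = left_end c k"
proof -
  obtain t where t: "c ! (i - 1) < t" "c[i - 1 := t] \<in> CC n"
    using nonneg_entry_raisable[OF i nonneg] by blast
  define y where "y = c[i - 1 := t]"
  have len: "length y = n - 1" "i \<le> length c"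
    using i length_coord by (simp_all add: y_def)
  have y_i: "y ! (i - 1) = t"
    using len i by (simp add: y_def)
  have "arc_coord n y"
    using t CC_iff_arc_coord size_pos y_def by blast
  moreover have "right_end c i < right_end y i" "left_end y i = left_end c i"
    using ends_nonneg_entry[of i y] ends_nonneg_entry[of i c] y_i t nonneg i len by simp_all
  moreover have "right_end y k = right_end c k" "left_end y k = left_end c k" if "k \<noteq> i" for k
    using ends_update_other[OF that i(1)] by (simp_all add: y_def)
  ultimately show thesis
    using that by metis
qed

lemma right_end_less_size:
  assumes i: "1 \<le> i" "i < n" and nonneg: "0 \<le> c ! (i - 1)"
  shows "right_end c i < int n"
proof -
  obtain y where "arc_coord n y" "right_end c i < right_end y i"
    using raised_coord[OF i nonneg] by blast
  then show ?thesis
    using arc_coord.right_end_le[of n y i] i by simp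
qed

lemma right_end_strictly_nested:
  assumes i: "1 \<le> i" "i < n" and nonneg: "0 \<le> c ! (i - 1)"
    and j: "1 \<le> j" "j < i" and reach: "int i \<le> right_end c j"
  shows "right_end c i < right_end c j"
proof -
  obtain y where y: "arc_coord n y" "right_end c i < right_end y i"
    "\<And>k. k \<noteq> i \<Longrightarrow> right_end y k = right_end c k"
    using raised_coord[OF i nonneg] by blast
  then show ?thesis
    using arc_coord.right_end_nested[OF y(1) j(1) j(2) i(2)] reach j by simp
qed

lemma left_end_at_right_end:
  assumes i: "1 \<le> i" "i < n" and nonneg: "0 \<le> c ! (i - 1)" and long: "int i < right_end c i"
  shows "int i \<le> left_end c (nat (right_end c i))"
proof -
  obtain y where y: "arc_coord n y" "right_end c i < right_end y i"
    "\<And>k. left_end y k = left_end c k"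
    using raised_coord[OF i nonneg] by blast
  define k where "k = nat (right_end c i)"
  have "i < k" "k < n" "int k < right_end y i"
    using long right_end_less_size[OF i nonneg] y(2) by (simp_all add: k_def)
  then show ?thesis
    using arc_coord.ends_compatible[OF y(1) i(1)] y(3) by (simp add: k_def)
qed

lemma next_start:
  assumes j: "1 \<le> j" "j < n" and nonneg: "0 \<le> c ! (j - 1)"
  shows "j < nat (right_end c j) + 1 \<and> nat (right_end c j) + 1 \<le> n \<and>
    int (nat (right_end c j)) = right_end c j"
  using right_end_ge[of j c] right_end_less_size[OF j nonneg] by linarith

lemma chain_induct [case_names step stop]:
  assumes step: "\<And>j. 1 \<le> j \<Longrightarrow> j < n \<Longrightarrow> 0 \<le> c ! (j - 1) \<Longrightarrow> P (nat (right_end c j) + 1) \<Longrightarrow> P j"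
    and stop: "\<And>j. \<not> (1 \<le> j \<and> j < n \<and> 0 \<le> c ! (j - 1)) \<Longrightarrow> P j"
  shows "P j"
proof (induction "n - j" arbitrary: j rule: less_induct)
  case less
  show ?case
  proof (cases "1 \<le> j \<and> j < n \<and> 0 \<le> c ! (j - 1)")
    case True
    then have "n - (nat (right_end c j) + 1) < n - j"
      using next_start[of j] by arith
    then show ?thesis
      using step less.hyps True by blast
  next
    case False
    then show ?thesis
      by (rule stop)
  qed
qed

lemma chain_end_stop: "1 \<le> j \<Longrightarrow> \<not> (j < n \<and> 0 \<le> c ! (j - 1)) \<Longrightarrow> chain_end c j = j"
  using length_coord by (subst chain_end.simps) auto

lemma chain_end_nonneg:
  "1 \<le> j \<Longrightarrow> j < n \<Longrightarrow> 0 \<le> c ! (j - 1) \<Longrightarrow> chain_end c j = chain_end c (nat (right_end c j) + 1)"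
  using length_coord by (subst chain_end.simps) auto

lemma chain_end_bounds: "1 \<le> j \<Longrightarrow> j \<le> n \<Longrightarrow> j \<le> chain_end c j \<and> chain_end c j \<le> n"
proof (induction j rule: chain_induct)
  case (step j)
  then show ?case
    using next_start[OF step.hyps] chain_end_nonneg[OF step.hyps] by simp
next
  case (stop j)
  then show ?case
    using chain_end_stop[of j] by simp
qed

lemma chain_end_after_right_end:
  assumes j: "1 \<le> j" "j < n" "0 \<le> c ! (j - 1)"
  shows "right_end c j < int (chain_end c j)"
  using chain_end_bounds[of "nat (right_end c j) + 1"] next_start[OF j] chain_end_nonneg[OF j]
  by linarith

lemma chain_end_within_arc:
  assumes j: "1 \<le> j" "j < n" "0 \<le> c ! (j - 1)"
  shows "j < k \<Longrightarrow> int k \<le> right_end c j \<Longrightarrow> int (chain_end c k) \<le> right_end c j"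
proof (induction k rule: chain_induct)
  case (step k)
  then have "right_end c k < right_end c j"
    using right_end_strictly_nested[OF step.hyps j(1)] by simp
  then show ?case
    using step.IH step.prems next_start[OF step.hyps] chain_end_nonneg[OF step.hyps] by simp
next
  case (stop k)
  then show ?case
    using chain_end_stop[of k] by simp
qed

lemma chain_end_nested:
  "1 \<le> j \<Longrightarrow> j \<le> k \<Longrightarrow> k < n \<Longrightarrow> k \<le> chain_end c j \<Longrightarrow> chain_end c k \<le> chain_end c j"
proof (induction j rule: chain_induct)
  case (step j)
  consider "k = j" | "j < k" "int k \<le> right_end c j" | "nat (right_end c j) + 1 \<le> k"
    using step.prems next_start[OF step.hyps] by linarith
  then show ?case
  proof cases
    case 1
    then show ?thesis
      by simp
  next
    case 2
    then show ?thesis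
      using chain_end_within_arc[OF step.hyps] chain_end_after_right_end[OF step.hyps] by force
  next
    case 3
    then show ?thesis
      using step.IH step.prems next_start[OF step.hyps] chain_end_nonneg[OF step.hyps] by simp
  qed
next
  case (stop j)
  then show ?case
    using chain_end_stop[of j] by simp
qed

lemma chain_end_left_end:
  "1 \<le> j \<Longrightarrow> j \<le> k \<Longrightarrow> k < n \<Longrightarrow> k < chain_end c j \<Longrightarrow> int j \<le> left_end c k"
proof (induction j rule: chain_induct)
  case (step j)
  note next_j = next_start[OF step.hyps]
  consider "k = j" | "j < k" "int k < right_end c j" | "j < k" "int k = right_end c j"
    | "nat (right_end c j) + 1 \<le> k"
    using step.prems next_j by linarith
  then show ?case
  proof cases
    case 1
    then show ?thesis
      using ends_nonneg_entry[of j c] step.hyps length_coord by simp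
  next
    case 2
    then show ?thesis
      using ends_compatible[OF step.hyps(1)] step.prems by simp
  next
    case 3
    then have "nat (right_end c j) = k"
      by (metis nat_int)
    then show ?thesis
      using left_end_at_right_end[OF step.hyps] 3 step.prems by simp
  next
    case 4
    then have "right_end c j < left_end c k"
      using step.IH step.prems next_j chain_end_nonneg[OF step.hyps] by simp
    then show ?thesis
      using right_end_ge[of j c] by linarith
  qed
next
  case (stop j)
  then show ?case
    using chain_end_stop[of j] by simp
qed

lemma synchronize_entry:
  assumes i: "1 \<le> i" "i < n"
  shows "synchronize c ! (i - 1) =
    (if c ! (i - 1) < 0 then c ! (i - 1) else int (chain_end c i) - int i)"
  using synchronize_nth[of i c] i length_coord by simp

lemma synchronize_entry_pos:
  assumes i: "1 \<le> i" "i < n" and nonneg: "0 \<le> c ! (i - 1)"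
  shows "0 < synchronize c ! (i - 1)"
  using synchronize_entry[OF i] chain_end_after_right_end[OF i nonneg] right_end_ge[of i c] nonneg
  by simp

lemma ends_synchronize:
  assumes j: "1 \<le> j" "j \<le> n"
  shows "right_end (synchronize c) j = int (chain_end c j) \<and> left_end (synchronize c) j = left_end c j"
proof (cases "j < n")
  case False
  then have "j = n"
    using j by simp
  then show ?thesis
    using ends_outside[of n "synchronize c"] ends_outside[of n c] chain_end_stop[of n] length_coord
      size_pos
    by (simp add: length_synchronize)
next
  case True
  note jn = j(1) True
  have len: "j \<le> length (synchronize c)" "j \<le> length c"
    using jn length_coord by (simp_all add: length_synchronize)
  show ?thesis
  proof (cases "c ! (j - 1) < 0")
    case True
    then show ?thesis
      using synchronize_entry[OF jn] ends_eq_if_nth_eq[of j "synchronize c" c] len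
        chain_end_stop[of j] ends_nonpos_entry[of j c] jn True
      by simp
  next
    case False
    then show ?thesis
      using synchronize_entry[OF jn] synchronize_entry_pos[OF jn] ends_nonneg_entry[of j "synchronize c"]
        ends_nonneg_entry[of j c] len jn
      by simp
  qed
qed

lemma sync_coord_synchronize: "sync_coord n (synchronize c)"
proof unfold_locales
  show "1 \<le> n" "length (synchronize c) = n - 1"
    using size_pos length_coord by (simp_all add: length_synchronize)
next
  fix i assume i: "1 \<le> i" "i < n"
  show "right_end (synchronize c) i \<le> int n"
    using ends_synchronize[of i] chain_end_bounds[of i] i by simp
  show "0 \<le> left_end (synchronize c) i"
    using ends_synchronize[of i] left_end_nonneg[OF i] i by simp
  show "synchronize c ! (i - 1) \<noteq> 0"
    using synchronize_entry[OF i] synchronize_entry_pos[OF i] by (cases "c ! (i - 1) < 0") auto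
next
  fix i k assume "1 \<le> i" "i < k" "k < n" "int k \<le> right_end (synchronize c) i"
  then show "right_end (synchronize c) k \<le> right_end (synchronize c) i"
    using ends_synchronize[of i] ends_synchronize[of k] chain_end_nested[of i k] by simp
next
  fix i k assume "1 \<le> k" "k < i" "i < n" "left_end (synchronize c) i \<le> int k"
  then show "left_end (synchronize c) i \<le> left_end (synchronize c) k"
    using ends_synchronize[of i] ends_synchronize[of k] left_end_nested[of k i] by simp
next
  fix i k assume "1 \<le> i" "i < k" "k < n" "int k < right_end (synchronize c) i"
  then show "int i \<le> left_end (synchronize c) k"
    using ends_synchronize[of i] ends_synchronize[of k] chain_end_left_end[of i k] by simp
qed

lemma right_twin_synchronize:
  assumes i: "1 \<le> i" "i < n" and nonneg: "0 \<le> c ! (i - 1)"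
  shows "right_twin (synchronize c) i = nat (right_end c i) + 1"
proof -
  note next_i = next_start[OF i nonneg]
  show ?thesis
    unfolding right_twin_def
  proof (rule Least_equality)
    show "i < nat (right_end c i) + 1 \<and>
      right_end (synchronize c) (nat (right_end c i) + 1) = right_end (synchronize c) i"
      using ends_synchronize[of "nat (right_end c i) + 1"] ends_synchronize[of i] next_i
        chain_end_nonneg[OF i nonneg] i
      by simp
  next
    fix k assume k: "i < k \<and> right_end (synchronize c) k = right_end (synchronize c) i"
    show "nat (right_end c i) + 1 \<le> k"
    proof (rule ccontr)
      assume "\<not> ?thesis"
      then have "int k \<le> right_end c i" "k < n"
        using next_i by linarith+
      then have "int (chain_end c k) \<le> right_end c i"
        using chain_end_within_arc[OF i nonneg] k by simp
      then show False
        using k ends_synchronize[of k] ends_synchronize[of i] \<open>k < n\<close> i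
          chain_end_after_right_end[OF i nonneg]
        by simp
    qed
  qed
qed

lemma vertex_synchronize: "vertex (synchronize c) n = c"
proof (rule nth_equalityI)
  show "length (vertex (synchronize c) n) = length c"
    by (simp add: length_vertex length_synchronize)
  fix m assume "m < length (vertex (synchronize c) n)"
  then have i: "1 \<le> m + 1" "m + 1 < n"
    using length_coord by (simp_all add: length_vertex length_synchronize)
  have m_le: "m + 1 \<le> length c"
    using i length_coord by simp
  have "vertex (synchronize c) n ! m = lower_entry (synchronize c) (m + 1)"
    using vertex_nth[of "m + 1" "synchronize c" n] i length_coord by (simp add: length_synchronize)
  also have "\<dots> = c ! m"
  proof (cases "c ! m < 0")
    case True
    then show ?thesis
      using synchronize_entry[OF i] by (simp add: lower_entry_def)
  next
    case False
    then show ?thesis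
      using synchronize_entry_pos[OF i] right_twin_synchronize[OF i] next_start[OF i]
        ends_nonneg_entry[OF i(1) m_le] False
      by (simp add: lower_entry_def)
  qed
  finally show "vertex (synchronize c) n ! m = c ! m" .
qed

lemma cell_eq_vertex_pair:
  "(c, max_correspondent n c) = (vertex (synchronize c) n, vertex (synchronize c) 1)"
  using sync_coord.max_correspondent_vertex[OF sync_coord_synchronize] vertex_synchronize by simp

lemma Gamma_cell: "Gamma (c, max_correspondent n c) = synchronize c"
  using cell_eq_vertex_pair sync_coord.Gamma_vertex[OF sync_coord_synchronize] by simp

end

lemma min_cell_coord_if_minimal_cellular:
  assumes n: "1 \<le> n" and c: "minimal_cellular n c"
  shows "min_cell_coord n c"
  using c CC_iff_arc_coord[OF n]
  by (auto simp: minimal_cellular_def up_defined_def min_cell_coord_def min_cell_coord_axioms_def)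

theorem theorem4p8:
  fixes n :: nat
  assumes "n \<ge> 1"
  shows "bij_betw Gamma (cells n) (CC_sync n)"
proof (rule bij_betw_byWitness[where f' = "\<lambda>s. (vertex s n, vertex s 1)"])
  have cell: "Gamma (c, max_correspondent n c) = synchronize c"
    "(vertex (synchronize c) n, vertex (synchronize c) 1) = (c, max_correspondent n c)"
    "synchronize c \<in> CC_sync n"
    if "minimal_cellular n c" for c
  proof -
    interpret min_cell_coord n c
      using min_cell_coord_if_minimal_cellular[OF assms that] .
    show "Gamma (c, max_correspondent n c) = synchronize c"
      "(vertex (synchronize c) n, vertex (synchronize c) 1) = (c, max_correspondent n c)"
      "synchronize c \<in> CC_sync n"
      using Gamma_cell cell_eq_vertex_pair sync_coord_synchronize CC_sync_iff_sync_coord[OF assms]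
      by simp_all
  qed
  show "\<forall>x\<in>cells n. (vertex (Gamma x) n, vertex (Gamma x) 1) = x"
    using cell(1,2) by (auto simp: cells_def)
  show "Gamma ` cells n \<subseteq> CC_sync n"
    using cell(1,3) by (auto simp: cells_def)
  show "\<forall>s\<in>CC_sync n. Gamma (vertex s n, vertex s 1) = s"
    using sync_coord.Gamma_vertex CC_sync_iff_sync_coord[OF assms] by blast
  show "(\<lambda>s. (vertex s n, vertex s 1)) ` CC_sync n \<subseteq> cells n"
    using sync_coord.vertex_pair_in_cells CC_sync_iff_sync_coord[OF assms] by blast
qed

end
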